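(* Assume $\alpha_1,\dots,\alpha_N,u,v\in\mathbb R$ satisfy $\alpha_i+\alpha_j>0$, $\alpha_i+u>0$, $\alpha_i+v>0$ for all $i,j$, and additionally $u+v>0$. For any down-right path $\mathcal P$ and any fixed $\lambda_1^{(0)}\in\mathbb R$, $$Z_{\mathrm{LG}}=\int_{\mathbb R^{2N+1}}\mathrm{wt}^{\mathcal{GP}}_{\mathrm{LG}}(\boldsymbol\lambda)\prod_{(i,j)\ne(1,0)}d\lambda_i^{(j)}$$ (integral over $\lambda_i^{(j)}$, $i\in\{1,2\}$, $0\le j\le N$, $(i,j)\ne(1,0)$) is finite and does not depend on the choice of $\mathcal P$ nor of $\lambda_1^{(0)}$.
   Context: Fix $N\ge1$, extend $\alpha_{j+kN}=\alpha_j$. Strip $\{(n,m)\in\mathbb Z^2:0\le m\le n\le m+N\}$. A down-right path is a sequence of strip vertices $\mathbf p_0=(m_0,m_0),\mathbf p_1,\dots,\mathbf p_N$ with steps $\mathbf p_j-\mathbf p_{j-1}\in\{(1,0),(0,-1)\}$; edge $\mathsf e_j$ from $\mathbf p_{j-1}$ to $\mathbf p_j$ has label $\ell_j=\alpha_n$ if it is the horizontal edge $(n-1,m)\to(n,m)$ and $\ell_j=\alpha_m$ if it is the vertical edge between $(n,m-1)$ and $(n,m)$. Set $(\mathrm{up}(j),\mathrm{low}(j))=(j,j-1)$ if $\mathsf e_j$ horizontal, $(j-1,j)$ if vertical. With $f_\theta(x)=e^{-\theta x-e^{-x}}$, for $\boldsymbol\lambda=(\lambda_i^{(j)})\in\mathbb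 R^{2N+2}$, $$\mathrm{wt}^{\mathcal{GP}}_{\mathrm{LG}}(\boldsymbol\lambda)=e^{-u(\lambda_1^{(0)}-\lambda_2^{(0)})}e^{-v(\lambda_1^{(N)}-\lambda_2^{(N)})}\prod_{j=1}^N\Big[\prod_{i=1}^2f_{\ell_j}\big(\lambda_i^{(\mathrm{up}(j))}-\lambda_i^{(\mathrm{low}(j))}\big)\Big]e^{-e^{-(\lambda_1^{(\mathrm{low}(j))}-\lambda_2^{(\mathrm{up}(j))})}}.$$ *)

theory Defs
  imports "HOL-Analysis.Analysis"
begin

definition alpha_ext :: "nat \<Rightarrow> (nat \<Rightarrow> real) \<Rightarrow> int \<Rightarrow> real" where
  "alpha_ext N a n = a (nat ((n - 1) mod int N) + 1)"

definition ffun :: "real \<Rightarrow> real \<Rightarrow> real" where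
  "ffun \<theta> x = exp (- \<theta> * x - exp (- x))"

definition in_strip :: "nat \<Rightarrow> int \<times> int \<Rightarrow> bool" where
  "in_strip N p \<longleftrightarrow> 0 \<le> snd p \<and> snd p \<le> fst p \<and> fst p \<le> snd p + int N"

text \<open>A path is encoded by its starting diagonal point (m0,m0) and the list of
  its steps: True = horizontal step (1,0), False = vertical step (0,-1).
  The vertex p_j is obtained after the first j steps.\<close>
definition path_vertex :: "int \<Rightarrow> bool list \<Rightarrow> nat \<Rightarrow> int \<times> int" where
  "path_vertex m0 s j =
     (m0 + int (length (filter id (take j s))),
      m0 - int (length (filter Not (take j s))))"

definition is_down_right_path :: "nat \<Rightarrow> int \<Rightarrow> bool list \<Rightarrow> bool" where
  "is_down_right_path N m0 s \<longleftrightarrow>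
     length s = N \<and> (\<forall>j\<le>N. in_strip N (path_vertex m0 s j))"

text \<open>Label of edge e_j (1 <= j <= N): alpha_n for the horizontal edge
  (n-1,m) -> (n,m), alpha_m for the vertical edge between (n,m-1) and (n,m).\<close>
definition edge_label :: "nat \<Rightarrow> (nat \<Rightarrow> real) \<Rightarrow> int \<Rightarrow> bool list \<Rightarrow> nat \<Rightarrow> real" where
  "edge_label N a m0 s j =
     (if s ! (j - 1) then alpha_ext N a (fst (path_vertex m0 s j))
      else alpha_ext N a (snd (path_vertex m0 s (j - 1))))"

definition up_idx :: "bool list \<Rightarrow> nat \<Rightarrow> nat" where
  "up_idx s j = (if s ! (j - 1) then j else j - 1)"

definition low_idx :: "bool list \<Rightarrow> nat \<Rightarrow> nat" where
  "low_idx s j = (if s ! (j - 1) then j - 1 else j)"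

text \<open>The weight; lam (i,j) stands for lambda_i^(j).\<close>
definition wt_LG :: "nat \<Rightarrow> (nat \<Rightarrow> real) \<Rightarrow> real \<Rightarrow> real \<Rightarrow> int \<Rightarrow> bool list
    \<Rightarrow> (nat \<times> nat \<Rightarrow> real) \<Rightarrow> real" where
  "wt_LG N a u v m0 s lam =
     exp (- u * (lam (1,0) - lam (2,0))) * exp (- v * (lam (1,N) - lam (2,N))) *
     (\<Prod>j\<in>{1..N}.
        (\<Prod>i\<in>{1,2::nat}. ffun (edge_label N a m0 s j) (lam (i, up_idx s j) - lam (i, low_idx s j)))
        * exp (- exp (- (lam (1, low_idx s j) - lam (2, up_idx s j)))))"

definition int_vars :: "nat \<Rightarrow> (nat \<times> nat) set" where
  "int_vars N = ({1,2} \<times> {0..N}) - {(1,0)}"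

definition Z_LG :: "nat \<Rightarrow> (nat \<Rightarrow> real) \<Rightarrow> real \<Rightarrow> real \<Rightarrow> int \<Rightarrow> bool list \<Rightarrow> real \<Rightarrow> ennreal" where
  "Z_LG N a u v m0 s x0 =
     (\<integral>\<^sup>+ lam. ennreal (wt_LG N a u v m0 s (lam((1,0) := x0)))
        \<partial>(PiM (int_vars N) (\<lambda>_. lborel)))"

end

theory Submission
  imports Defs
begin

text \<open>
  Integrating out \<open>\<lambda>\<^bsup>(N)\<^esup>, ..., \<lambda>\<^bsup>(1)\<^esup>\<close> pair by pair writes \<open>Z\<close> as an integral over
  \<open>\<lambda>\<^sub>2\<^bsup>(0)\<^esup>\<close> of a chain of transfer kernels, one per edge of the path, closed off by the
  boundary factor of \<open>v\<close>. Such a chain integral depends only on the difference of its two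
  arguments. This gives independence of \<open>\<lambda>\<^sub>1\<^bsup>(0)\<^esup>\<close> and two local moves: the substitution
  \<open>(y1, y2) \<mapsto> (x1 + x2 - y2, x1 + x2 - y1)\<close> turns a vertical kernel into the horizontal one
  with the same label, and a reflected shift of the middle variables makes a horizontal and a
  vertical kernel commute. Hence \<open>Z\<close> depends only on the multiset of edge labels, which for
  every down-right path is \<open>{\<alpha>\<^sub>1, ..., \<alpha>\<^sub>N}\<close> by periodicity.

  For finiteness take the horizontal path and propagate bounds \<open>C exp (- q (y1 - y2))\<close> backwards
  along the chain, paying for a change of the rate \<open>q\<close> with the coupling factor via
  \<open>exp (- exp z) \<le> exp (t ln t - t - t z)\<close>; the coupling factor of the first kernel then makes
  the remaining integral over \<open>\<lambda>\<^sub>2\<^bsup>(0)\<^esup>\<close> converge.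
\<close>

lemma nn_integral_lborel_shift:
  fixes f :: "real \<Rightarrow> ennreal"
  assumes "f \<in> borel_measurable borel"
  shows "(\<integral>\<^sup>+x. f x \<partial>lborel) = (\<integral>\<^sup>+x. f (t + x) \<partial>lborel)"
  using nn_integral_real_affine[OF assms, of 1 t] by simp

lemma nn_integral_lborel_reflect:
  fixes f :: "real \<Rightarrow> ennreal"
  assumes "f \<in> borel_measurable borel"
  shows "(\<integral>\<^sup>+x. f x \<partial>lborel) = (\<integral>\<^sup>+x. f (t - x) \<partial>lborel)"
  using nn_integral_real_affine[OF assms, of "-1" t] by simp

lemma nn_integral_lborel_swap:
  fixes F :: "real \<Rightarrow> real \<Rightarrow> ennreal"
  assumes "case_prod F \<in> borel_measurable (lborel \<Otimes>\<^sub>M lborel)"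
  shows "(\<integral>\<^sup>+x. \<integral>\<^sup>+y. F x y \<partial>lborel \<partial>lborel) = (\<integral>\<^sup>+y. \<integral>\<^sup>+x. F x y \<partial>lborel \<partial>lborel)"
  using lborel_pair.Fubini'[OF assms] by simp

lemma nn_integral_lborel_reflect_swap:
  fixes F :: "real \<Rightarrow> real \<Rightarrow> ennreal"
  assumes [measurable]: "case_prod F \<in> borel_measurable (lborel \<Otimes>\<^sub>M lborel)"
  shows "(\<integral>\<^sup>+y1. \<integral>\<^sup>+y2. F y1 y2 \<partial>lborel \<partial>lborel)
       = (\<integral>\<^sup>+y1. \<integral>\<^sup>+y2. F (c1 - y2) (c2 - y1) \<partial>lborel \<partial>lborel)"
proof -
  have "(\<integral>\<^sup>+y1. \<integral>\<^sup>+y2. F y1 y2 \<partial>lborel \<partial>lborel) = (\<integral>\<^sup>+y2. \<integral>\<^sup>+y1. F y1 y2 \<partial>lborel \<partial>lborel)"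
    by (rule nn_integral_lborel_swap) measurable
  also have "\<dots> = (\<integral>\<^sup>+y2. \<integral>\<^sup>+y1. F (c1 - y1) y2 \<partial>lborel \<partial>lborel)"
    by (intro nn_integral_cong nn_integral_lborel_reflect) measurable
  also have "\<dots> = (\<integral>\<^sup>+y2. \<integral>\<^sup>+y1. F (c1 - y1) (c2 - y2) \<partial>lborel \<partial>lborel)"
    by (rule nn_integral_lborel_reflect[where t = c2]) measurable
  finally show ?thesis .
qed

lemma nn_integral_lborel_pair:
  fixes G :: "real \<Rightarrow> real \<Rightarrow> ennreal"
  assumes "case_prod G \<in> borel_measurable (lborel \<Otimes>\<^sub>M lborel)"
  shows "(\<integral>\<^sup>+y1. \<integral>\<^sup>+y2. G y1 y2 \<partial>lborel \<partial>lborel) = (\<integral>\<^sup>+y. G (fst y) (snd y) \<partial>(lborel \<Otimes>\<^sub>M lborel))"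
  using lborel.nn_integral_fst[OF assms] by (simp add: case_prod_beta')

lemma nn_integral_lborel_swap_pairs:
  fixes F :: "real \<Rightarrow> real \<Rightarrow> real \<Rightarrow> real \<Rightarrow> ennreal"
  assumes [measurable]: "(\<lambda>(y, z). F (fst y) (snd y) (fst z) (snd z))
      \<in> borel_measurable ((lborel \<Otimes>\<^sub>M lborel) \<Otimes>\<^sub>M (lborel \<Otimes>\<^sub>M lborel))"
  shows "(\<integral>\<^sup>+y1. \<integral>\<^sup>+y2. \<integral>\<^sup>+z1. \<integral>\<^sup>+z2. F y1 y2 z1 z2 \<partial>lborel \<partial>lborel \<partial>lborel \<partial>lborel)
       = (\<integral>\<^sup>+z1. \<integral>\<^sup>+z2. \<integral>\<^sup>+y1. \<integral>\<^sup>+y2. F y1 y2 z1 z2 \<partial>lborel \<partial>lborel \<partial>lborel \<partial>lborel)"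
proof -
  interpret P: pair_sigma_finite "lborel \<Otimes>\<^sub>M lborel :: (real \<times> real) measure" "lborel \<Otimes>\<^sub>M lborel :: (real \<times> real) measure"
    by (simp add: lborel_prod pair_sigma_finite_def lborel.sigma_finite_measure_axioms)
  have [measurable]: "(\<lambda>z. F y1 y2 (fst z) (snd z)) \<in> borel_measurable (lborel \<Otimes>\<^sub>M lborel)"
    and [measurable]: "(\<lambda>y. F (fst y) (snd y) z1 z2) \<in> borel_measurable (lborel \<Otimes>\<^sub>M lborel)" for y1 y2 z1 z2
    using measurable_Pair2[OF assms, of "(y1, y2)"] measurable_Pair1[OF assms, of "(z1, z2)"]
    by (simp_all add: space_pair_measure)
  have "(\<integral>\<^sup>+y1. \<integral>\<^sup>+y2. \<integral>\<^sup>+z1. \<integral>\<^sup>+z2. F y1 y2 z1 z2 \<partial>lborel \<partial>lborel \<partial>lborel \<partial>lborel)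
      = (\<integral>\<^sup>+y1. \<integral>\<^sup>+y2. \<integral>\<^sup>+z. F y1 y2 (fst z) (snd z) \<partial>(lborel \<Otimes>\<^sub>M lborel) \<partial>lborel \<partial>lborel)"
    by (intro nn_integral_cong nn_integral_lborel_pair) measurable
  also have "\<dots> = (\<integral>\<^sup>+y. \<integral>\<^sup>+z. F (fst y) (snd y) (fst z) (snd z) \<partial>(lborel \<Otimes>\<^sub>M lborel) \<partial>(lborel \<Otimes>\<^sub>M lborel))"
    by (rule nn_integral_lborel_pair) measurable
  also have "\<dots> = (\<integral>\<^sup>+z. \<integral>\<^sup>+y. F (fst y) (snd y) (fst z) (snd z) \<partial>(lborel \<Otimes>\<^sub>M lborel) \<partial>(lborel \<Otimes>\<^sub>M lborel))"
    by (rule P.Fubini') measurable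
  also have "\<dots> = (\<integral>\<^sup>+z1. \<integral>\<^sup>+z2. \<integral>\<^sup>+y. F (fst y) (snd y) z1 z2 \<partial>(lborel \<Otimes>\<^sub>M lborel) \<partial>lborel \<partial>lborel)"
    by (rule nn_integral_lborel_pair[symmetric]) measurable
  also have "\<dots> = (\<integral>\<^sup>+z1. \<integral>\<^sup>+z2. \<integral>\<^sup>+y1. \<integral>\<^sup>+y2. F y1 y2 z1 z2 \<partial>lborel \<partial>lborel \<partial>lborel \<partial>lborel)"
    by (intro nn_integral_cong nn_integral_lborel_pair[symmetric]) measurable
  finally show ?thesis .
qed

lemma nn_integral_lborel_product:
  fixes g1 g2 :: "real \<Rightarrow> real"
  assumes [measurable]: "g1 \<in> borel_measurable borel" "g2 \<in> borel_measurable borel"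
  shows "(\<integral>\<^sup>+y1. \<integral>\<^sup>+y2. ennreal (g1 y1) * ennreal (g2 y2) \<partial>lborel \<partial>lborel)
       = (\<integral>\<^sup>+y. ennreal (g1 y) \<partial>lborel) * (\<integral>\<^sup>+y. ennreal (g2 y) \<partial>lborel)"
  by (simp add: nn_integral_cmult nn_integral_multc)

lemma nn_integral_exp_halfline_finite:
  fixes l :: real
  assumes "l > 0"
  shows "(\<integral>\<^sup>+x. ennreal (exp (- l * x)) * indicator {0..} x \<partial>lborel) < \<infinity>"
  using nn_integral_has_integral_lebesgue'[OF _ has_integral_exp_minus_to_infinity[OF assms, of 0]]
  by simp

lemma exp_neg_exp_le:
  fixes t z :: real
  assumes "t \<ge> 0"
  shows "exp (- exp z) \<le> exp (t * ln t - t - t * z)"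
proof (cases "t = 0")
  case False
  with assms have t: "t > 0" by simp
  have "1 + (z - ln t) \<le> exp (z - ln t)"
    by (rule exp_ge_add_one_self)
  also have "\<dots> = exp z / t"
    using t by (simp add: exp_diff)
  finally have "t * (1 + (z - ln t)) \<le> exp z"
    using t by (simp add: field_simps)
  then show ?thesis
    by (simp add: algebra_simps)
qed simp

lemma ffun_pos: "ffun \<theta> x > 0"
  unfolding ffun_def by simp

lemma borel_measurable_ffun [measurable (raw)]:
  assumes [measurable]: "f \<in> borel_measurable M"
  shows "(\<lambda>w. ffun \<theta> (f w)) \<in> borel_measurable M"
  unfolding ffun_def by measurable

text \<open>This is \<open>\<Gamma> \<theta>\<close>; only its finiteness for \<open>\<theta> > 0\<close> is needed.\<close>
definition ffun_integral :: "real \<Rightarrow> ennreal" where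
  "ffun_integral \<theta> = (\<integral>\<^sup>+r. ennreal (ffun \<theta> r) \<partial>lborel)"

lemma nn_integral_ffun_exp:
  "(\<integral>\<^sup>+y. ennreal (ffun \<theta> (y - x) * exp (w * y)) \<partial>lborel) = ennreal (exp (w * x)) * ffun_integral (\<theta> - w)"
proof -
  have "(\<integral>\<^sup>+y. ennreal (ffun \<theta> (y - x) * exp (w * y)) \<partial>lborel)
      = (\<integral>\<^sup>+r. ennreal (ffun \<theta> r * exp (w * (x + r))) \<partial>lborel)"
    by (subst nn_integral_lborel_shift[where t = x]) simp_all
  also have "\<dots> = (\<integral>\<^sup>+r. ennreal (exp (w * x)) * ennreal (ffun (\<theta> - w) r) \<partial>lborel)"
    by (intro nn_integral_cong)
      (simp add: ffun_def ennreal_mult'[symmetric] mult_exp_exp algebra_simps)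
  finally show ?thesis
    by (simp add: nn_integral_cmult ffun_integral_def)
qed

lemma nn_integral_ffun_reflect_exp:
  "(\<integral>\<^sup>+p. ennreal (ffun \<theta> (x - p) * exp (w * p)) \<partial>lborel) = ennreal (exp (w * x)) * ffun_integral (\<theta> + w)"
proof -
  have "(\<integral>\<^sup>+p. ennreal (ffun \<theta> (x - p) * exp (w * p)) \<partial>lborel)
      = (\<integral>\<^sup>+r. ennreal (exp (w * x)) * ennreal (ffun \<theta> (r - 0) * exp (- w * r)) \<partial>lborel)"
    by (subst nn_integral_lborel_reflect[where t = x], simp)
      (intro nn_integral_cong, simp add: ennreal_mult'[symmetric] mult_exp_exp algebra_simps)
  then show ?thesis
    using nn_integral_ffun_exp[of \<theta> 0 "- w"] by (simp add: nn_integral_cmult)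
qed

lemma ffun_integral_finite:
  assumes "\<theta> > 0"
  shows "ffun_integral \<theta> < \<infinity>"
proof -
  define D where "D = exp ((\<theta> + 1) * ln (\<theta> + 1) - (\<theta> + 1))"
  have bound: "ennreal (ffun \<theta> r) \<le> ennreal (exp (- \<theta> * r)) * indicator {0..} r
      + ennreal D * (ennreal (exp (- 1 * (- r))) * indicator {0..} (- r))" for r
  proof (cases "r \<ge> 0")
    case True
    then have "ffun \<theta> r \<le> exp (- \<theta> * r)"
      unfolding ffun_def by simp
    with True show ?thesis
      by (simp add: ennreal_leI add_increasing2)
  next
    case False
    have "exp (- exp (- r)) \<le> exp ((\<theta> + 1) * ln (\<theta> + 1) - (\<theta> + 1) - (\<theta> + 1) * (- r))"
      by (rule exp_neg_exp_le) (use assms in simp)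
    then have "ffun \<theta> r \<le> D * exp (- 1 * (- r))"
      unfolding ffun_def D_def exp_diff[symmetric]
      by (simp add: exp_add[symmetric] mult_exp_exp algebra_simps)
    with False show ?thesis
      by (simp add: ennreal_mult'[symmetric] D_def ennreal_leI)
  qed
  have "ffun_integral \<theta> \<le> (\<integral>\<^sup>+r. ennreal (exp (- \<theta> * r)) * indicator {0..} r \<partial>lborel)
      + ennreal D * (\<integral>\<^sup>+r. ennreal (exp (- 1 * (- r))) * indicator {0..} (- r) \<partial>lborel)"
    unfolding ffun_integral_def
    by (subst nn_integral_cmult[symmetric], measurable, subst nn_integral_add[symmetric], measurable)
      (intro nn_integral_mono bound)
  also have "(\<integral>\<^sup>+r. ennreal (exp (- 1 * (- r))) * indicator {0..} (- r) \<partial>lborel)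
      = (\<integral>\<^sup>+r. ennreal (exp (- 1 * r)) * indicator {0..} r \<partial>lborel)"
    using nn_integral_lborel_reflect[of "\<lambda>r. ennreal (exp (- 1 * r)) * indicator {0..} r" 0] by simp
  also have "(\<integral>\<^sup>+r. ennreal (exp (- \<theta> * r)) * indicator {0..} r \<partial>lborel)
      + ennreal D * (\<integral>\<^sup>+r. ennreal (exp (- 1 * r)) * indicator {0..} r \<partial>lborel) < \<infinity>"
    using nn_integral_exp_halfline_finite[OF assms] nn_integral_exp_halfline_finite[of 1]
    by (simp add: ennreal_mult_less_top)
  finally show ?thesis .
qed

section \<open>Edge kernels and chain integrals\<close>

text \<open>The factor of the weight belonging to edge \<open>e\<^sub>j\<close>, with \<open>(x1, x2) = \<lambda>\<^bsup>(j-1)\<^esup>\<close>,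
  \<open>(y1, y2) = \<lambda>\<^bsup>(j)\<^esup>\<close>, and \<open>b\<close> true iff \<open>e\<^sub>j\<close> is horizontal.\<close>
definition edge_kernel :: "bool \<Rightarrow> real \<Rightarrow> real \<Rightarrow> real \<Rightarrow> real \<Rightarrow> real \<Rightarrow> real" where
  "edge_kernel b \<theta> x1 x2 y1 y2 =
     (if b then ffun \<theta> (y1 - x1) * ffun \<theta> (y2 - x2) * exp (- exp (- (x1 - y2)))
      else ffun \<theta> (x1 - y1) * ffun \<theta> (x2 - y2) * exp (- exp (- (y1 - x2))))"

text \<open>The integral over \<open>\<lambda>\<^bsup>(j)\<^esup>\<close>, ..., \<open>\<lambda>\<^bsup>(N)\<^esup>\<close> of the factors of the remaining edges \<open>ks\<close>
  and of the right boundary, given \<open>\<lambda>\<^bsup>(j-1)\<^esup> = (x1, x2)\<close>.\<close>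
fun chain_integral :: "real \<Rightarrow> (bool \<times> real) list \<Rightarrow> real \<Rightarrow> real \<Rightarrow> ennreal" where
  "chain_integral v [] x1 x2 = ennreal (exp (- (v * (x1 - x2))))"
| "chain_integral v ((b, \<theta>) # ks) x1 x2 =
     (\<integral>\<^sup>+y1. \<integral>\<^sup>+y2. ennreal (edge_kernel b \<theta> x1 x2 y1 y2) * chain_integral v ks y1 y2 \<partial>lborel \<partial>lborel)"

lemma edge_kernel_nonneg: "edge_kernel b \<theta> x1 x2 y1 y2 \<ge> 0"
  unfolding edge_kernel_def ffun_def by auto

lemma borel_measurable_edge_kernel [measurable (raw)]:
  assumes "f1 \<in> borel_measurable M" "f2 \<in> borel_measurable M"
    and "g1 \<in> borel_measurable M" "g2 \<in> borel_measurable M"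
  shows "(\<lambda>w. edge_kernel b \<theta> (f1 w) (f2 w) (g1 w) (g2 w)) \<in> borel_measurable M"
  unfolding edge_kernel_def using assms by measurable

lemma borel_measurable_chain_integral_pair:
  "(\<lambda>(x1, x2). chain_integral v ks x1 x2) \<in> borel_measurable (lborel \<Otimes>\<^sub>M lborel)"
proof (induction ks)
  case (Cons k ks)
  then show ?case by (cases k) (simp, measurable)
qed simp

lemma borel_measurable_chain_integral [measurable (raw)]:
  assumes "f1 \<in> borel_measurable M" "f2 \<in> borel_measurable M"
  shows "(\<lambda>w. chain_integral v ks (f1 w) (f2 w)) \<in> borel_measurable M"
proof -
  have "(\<lambda>w. (f1 w, f2 w)) \<in> measurable M (lborel \<Otimes>\<^sub>M lborel)"
    using assms by measurable
  from measurable_compose[OF this borel_measurable_chain_integral_pair] show ?thesis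
    by simp
qed

lemma chain_integral_Cons_cong:
  "chain_integral v ks = chain_integral v ks' \<Longrightarrow> chain_integral v (k # ks) = chain_integral v (k # ks')"
  by (cases k) (simp add: fun_eq_iff)

lemma chain_integral_shift: "chain_integral v ks (x1 + t) (x2 + t) = chain_integral v ks x1 x2"
proof (induction ks arbitrary: x1 x2)
  case (Cons k ks)
  obtain b \<theta> where k: "k = (b, \<theta>)"
    by force
  have "chain_integral v (k # ks) (x1 + t) (x2 + t) = (\<integral>\<^sup>+y1. \<integral>\<^sup>+y2.
      ennreal (edge_kernel b \<theta> (x1 + t) (x2 + t) (t + y1) (t + y2)) * chain_integral v ks (t + y1) (t + y2)
      \<partial>lborel \<partial>lborel)"
    unfolding k chain_integral.simps
    by (subst nn_integral_lborel_shift[where t = t], measurable)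
      (intro nn_integral_cong nn_integral_lborel_shift, measurable)
  also have "\<dots> = chain_integral v (k # ks) x1 x2"
    using Cons.IH by (simp add: k) (intro nn_integral_cong, simp add: edge_kernel_def algebra_simps)
  finally show ?case .
qed (simp add: algebra_simps)

lemma chain_integral_diff: "chain_integral v ks y1 y2 = chain_integral v ks 0 (y2 - y1)"
  using chain_integral_shift[of v ks 0 y1 "y2 - y1"] by simp

section \<open>Only the multiset of labels matters\<close>

lemma edge_kernel_flip:
  "edge_kernel False \<theta> x1 x2 (x1 + x2 - y2) (x1 + x2 - y1) = edge_kernel True \<theta> x1 x2 y1 y2"
  unfolding edge_kernel_def by (simp add: algebra_simps)

lemma chain_integral_flip: "chain_integral v ((False, \<theta>) # ks) = chain_integral v ((True, \<theta>) # ks)"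
proof (intro ext)
  fix x1 x2 :: real
  let ?c = "x1 + x2"
  have "chain_integral v ((False, \<theta>) # ks) x1 x2 = (\<integral>\<^sup>+y1. \<integral>\<^sup>+y2.
      ennreal (edge_kernel False \<theta> x1 x2 (?c - y2) (?c - y1)) * chain_integral v ks (?c - y2) (?c - y1)
      \<partial>lborel \<partial>lborel)"
    unfolding chain_integral.simps by (rule nn_integral_lborel_reflect_swap) measurable
  also have "\<dots> = chain_integral v ((True, \<theta>) # ks) x1 x2"
  proof (simp only: chain_integral.simps edge_kernel_flip, intro nn_integral_cong)
    fix y1 y2
    show "ennreal (edge_kernel True \<theta> x1 x2 y1 y2) * chain_integral v ks (?c - y2) (?c - y1)
        = ennreal (edge_kernel True \<theta> x1 x2 y1 y2) * chain_integral v ks y1 y2"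
      using chain_integral_diff[of v ks "?c - y2" "?c - y1"] chain_integral_diff[of v ks y1 y2] by simp
  qed
  finally show "chain_integral v ((False, \<theta>) # ks) x1 x2 = chain_integral v ((True, \<theta>) # ks) x1 x2" .
qed

lemma edge_kernel_exp:
  "edge_kernel True \<theta> x1 x2 y1 y2 =
     exp (\<theta> * (x1 + x2 - y1 - y2) - exp (x1 - y1) - exp (x2 - y2) - exp (y2 - x1))"
  "edge_kernel False \<theta> x1 x2 y1 y2 =
     exp (\<theta> * (y1 + y2 - x1 - x2) - exp (y1 - x1) - exp (y2 - x2) - exp (x2 - y1))"
  unfolding edge_kernel_def ffun_def mult_exp_exp by (simp_all add: algebra_simps)

text \<open>\<open>\<rho>\<close> and \<open>\<sigma>\<close> are chosen so that after the substitution \<open>y = (\<rho> - w2, \<sigma> - w1)\<close> the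
  exponentials on both sides match term by term.\<close>
lemma edge_kernel_commute:
  fixes \<rho> \<sigma> x1 x2 z1 z2 :: real
  assumes e\<sigma>: "exp \<sigma> * (exp (- x1) + exp (- z1)) = exp x2 + exp z2"
    and sum: "\<rho> + \<sigma> = x1 + x2 + z1 + z2"
  shows "edge_kernel True a x1 x2 (\<rho> - w2) (\<sigma> - w1) * edge_kernel False b (\<rho> - w2) (\<sigma> - w1) z1 z2
       = edge_kernel False b x1 x2 w1 w2 * edge_kernel True a w1 w2 z1 z2"
proof -
  have \<rho>: "\<rho> = x1 + x2 + z1 + z2 - \<sigma>" using sum by simp
  have e\<rho>: "exp \<rho> * (exp (- x2) + exp (- z2)) = exp x1 + exp z1"
  proof -
    have "exp \<rho> * exp \<sigma> = exp x1 * exp z1 * (exp x2 * exp z2)"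
      by (simp only: mult_exp_exp sum add_ac)
    then have "exp \<rho> * (exp (- x2) + exp (- z2)) * exp \<sigma>
        = exp x1 * exp z1 * (exp x2 * exp z2 * (exp (- x2) + exp (- z2)))"
      by (simp add: mult_ac)
    also have "\<dots> = exp x1 * exp z1 * (exp \<sigma> * (exp (- x1) + exp (- z1)))"
      unfolding e\<sigma> by (simp add: exp_minus field_simps)
    also have "\<dots> = (exp x1 + exp z1) * exp \<sigma>"
      by (simp add: exp_minus field_simps)
    finally show ?thesis by simp
  qed
  have y1_terms: "exp (x1 - (\<rho> - w2)) + exp (z1 - (\<rho> - w2)) = exp (w2 - x2) + exp (w2 - z2)"
    using arg_cong[OF e\<rho>, of "\<lambda>t. exp w2 * t"] by (simp add: exp_diff exp_add exp_minus field_simps)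
  have y2_terms: "exp (x2 - (\<sigma> - w1)) + exp (z2 - (\<sigma> - w1)) = exp (w1 - x1) + exp (w1 - z1)"
    using arg_cong[OF e\<sigma>, of "\<lambda>t. exp w1 * t"] by (simp add: exp_diff exp_add exp_minus field_simps)
  have coupling_terms: "exp (\<sigma> - w1 - x1) + exp (\<sigma> - w1 - z1) = exp (x2 - w1) + exp (z2 - w1)"
    using arg_cong[OF e\<sigma>, of "\<lambda>t. exp (- w1) * t"] by (simp add: exp_diff exp_add exp_minus field_simps)
  have lin: "a * (x1 + x2 - (\<rho> - w2) - (\<sigma> - w1)) + b * (z1 + z2 - (\<rho> - w2) - (\<sigma> - w1))
      = b * (w1 + w2 - x1 - x2) + a * (w1 + w2 - z1 - z2)"
    unfolding \<rho> by (simp add: algebra_simps)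
  show ?thesis
    unfolding edge_kernel_exp mult_exp_exp using y1_terms y2_terms coupling_terms lin by (intro arg_cong[where f=exp]) linarith
qed

lemma nn_integral_edge_kernel_commute:
  "(\<integral>\<^sup>+y1. \<integral>\<^sup>+y2. ennreal (edge_kernel True a x1 x2 y1 y2 * edge_kernel False b y1 y2 z1 z2) \<partial>lborel \<partial>lborel)
 = (\<integral>\<^sup>+w1. \<integral>\<^sup>+w2. ennreal (edge_kernel False b x1 x2 w1 w2 * edge_kernel True a w1 w2 z1 z2) \<partial>lborel \<partial>lborel)"
proof -
  define \<sigma> where "\<sigma> = ln (exp x2 + exp z2) - ln (exp (- x1) + exp (- z1))"
  have "exp (- x1) + exp (- z1) > 0" "exp x2 + exp z2 > 0"
    by (simp_all add: add_pos_pos)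
  then have e\<sigma>: "exp \<sigma> * (exp (- x1) + exp (- z1)) = exp x2 + exp z2"
    unfolding \<sigma>_def by (simp add: exp_diff)
  have sum: "(x1 + x2 + z1 + z2 - \<sigma>) + \<sigma> = x1 + x2 + z1 + z2"
    by simp
  show ?thesis
    by (subst nn_integral_lborel_reflect_swap[of _ "x1 + x2 + z1 + z2 - \<sigma>" \<sigma>])
      (measurable, simp only: edge_kernel_commute[OF e\<sigma> sum])
qed

lemma chain_integral_Cons_Cons:
  "chain_integral v ((b1, a1) # (b2, a2) # ks) x1 x2 = (\<integral>\<^sup>+z1. \<integral>\<^sup>+z2.
     (\<integral>\<^sup>+y1. \<integral>\<^sup>+y2. ennreal (edge_kernel b1 a1 x1 x2 y1 y2 * edge_kernel b2 a2 y1 y2 z1 z2) \<partial>lborel \<partial>lborel)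
     * chain_integral v ks z1 z2 \<partial>lborel \<partial>lborel)"
proof -
  have "chain_integral v ((b1, a1) # (b2, a2) # ks) x1 x2 = (\<integral>\<^sup>+y1. \<integral>\<^sup>+y2. \<integral>\<^sup>+z1. \<integral>\<^sup>+z2.
      ennreal (edge_kernel b1 a1 x1 x2 y1 y2) * (ennreal (edge_kernel b2 a2 y1 y2 z1 z2) * chain_integral v ks z1 z2)
      \<partial>lborel \<partial>lborel \<partial>lborel \<partial>lborel)"
    by (simp add: nn_integral_cmult)
  also have "\<dots> = (\<integral>\<^sup>+z1. \<integral>\<^sup>+z2. \<integral>\<^sup>+y1. \<integral>\<^sup>+y2.
      ennreal (edge_kernel b1 a1 x1 x2 y1 y2 * edge_kernel b2 a2 y1 y2 z1 z2) * chain_integral v ks z1 z2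
      \<partial>lborel \<partial>lborel \<partial>lborel \<partial>lborel)"
    by (subst nn_integral_lborel_swap_pairs, measurable)
      (simp add: ennreal_mult edge_kernel_nonneg mult.assoc)
  finally show ?thesis
    by (simp add: nn_integral_multc)
qed

lemma chain_integral_commute:
  "chain_integral v ((True, a) # (False, b) # ks) = chain_integral v ((False, b) # (True, a) # ks)"
  by (intro ext) (simp only: chain_integral_Cons_Cons nn_integral_edge_kernel_commute)

lemma chain_integral_horizontal: "chain_integral v ks = chain_integral v (map (\<lambda>k. (True, snd k)) ks)"
proof (induction ks)
  case (Cons k ks)
  obtain b \<theta> where k: "k = (b, \<theta>)" by force
  have "chain_integral v ((b, \<theta>) # ks) = chain_integral v ((True, \<theta>) # ks)"
    by (cases b) (simp_all add: chain_integral_flip)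
  then show ?case
    using chain_integral_Cons_cong[OF Cons.IH] by (simp add: k)
qed simp

lemma chain_integral_horizontal_swap:
  "chain_integral v ((True, a) # (True, b) # ks) = chain_integral v ((True, b) # (True, a) # ks)"
proof -
  have "chain_integral v ((True, a) # (True, b) # ks) = chain_integral v ((True, a) # (False, b) # ks)"
    by (rule chain_integral_Cons_cong) (rule chain_integral_flip[symmetric])
  then show ?thesis
    by (simp add: chain_integral_commute chain_integral_flip)
qed

lemma chain_integral_horizontal_move:
  "chain_integral v (map (Pair True) (\<theta> # xs @ ys)) = chain_integral v (map (Pair True) (xs @ \<theta> # ys))"
proof (induction xs)
  case (Cons x xs)
  then show ?case
    using chain_integral_horizontal_swap[of v \<theta> x "map (Pair True) (xs @ ys)"]
      chain_integral_Cons_cong[OF Cons.IH, of "(True, x)"] by simp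
qed simp

lemma chain_integral_horizontal_perm:
  "mset \<theta>s = mset \<theta>s' \<Longrightarrow> chain_integral v (map (Pair True) \<theta>s) = chain_integral v (map (Pair True) \<theta>s')"
proof (induction \<theta>s arbitrary: \<theta>s')
  case (Cons \<theta> \<theta>s)
  then have "\<theta> \<in> set \<theta>s'"
    by (metis list.set_intros(1) set_mset_mset)
  then obtain xs ys where \<theta>s': "\<theta>s' = xs @ \<theta> # ys"
    by (meson split_list)
  then have "mset \<theta>s = mset (xs @ ys)"
    using Cons.prems by simp
  from chain_integral_Cons_cong[OF Cons.IH[OF this], of "(True, \<theta>)"]
  have "chain_integral v (map (Pair True) (\<theta> # \<theta>s)) = chain_integral v (map (Pair True) (\<theta> # xs @ ys))"
    by simp
  then show ?case
    unfolding \<theta>s' chain_integral_horizontal_move .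
qed simp

lemma chain_integral_mset_eq:
  assumes "mset (map snd ks) = mset (map snd ks')"
  shows "chain_integral v ks = chain_integral v ks'"
proof -
  have horizontal: "chain_integral v ks = chain_integral v (map (Pair True) (map snd ks))"
    for ks :: "(bool \<times> real) list"
    using chain_integral_horizontal[of v ks] by (simp add: comp_def)
  show ?thesis
    unfolding horizontal[of ks] horizontal[of ks'] by (rule chain_integral_horizontal_perm[OF assms])
qed

section \<open>Finiteness\<close>

text \<open>\<open>Z\<close> for the kernels \<open>ks\<close> of a path and \<open>\<lambda>\<^sub>1\<^bsup>(0)\<^esup> = x0\<close>; the variable \<open>x2\<close> is \<open>\<lambda>\<^sub>2\<^bsup>(0)\<^esup>\<close>.\<close>
definition chain_partition :: "real \<Rightarrow> real \<Rightarrow> real \<Rightarrow> (bool \<times> real) list \<Rightarrow> ennreal" where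
  "chain_partition u v x0 ks =
     (\<integral>\<^sup>+x2. ennreal (exp (- (u * (x0 - x2)))) * chain_integral v ks x0 x2 \<partial>lborel)"

lemma chain_partition_eq:
  "chain_partition u v x0 ks = (\<integral>\<^sup>+p. ennreal (exp (u * p)) * chain_integral v ks 0 p \<partial>lborel)"
  unfolding chain_partition_def
  by (subst nn_integral_lborel_shift[where t = x0], measurable)
    (intro nn_integral_cong, simp add: chain_integral_diff[of v ks x0])

definition chain_exp_bounded :: "real \<Rightarrow> (bool \<times> real) list \<Rightarrow> real \<Rightarrow> bool" where
  "chain_exp_bounded v ks q \<longleftrightarrow>
     (\<exists>C < \<infinity>. \<forall>y1 y2. chain_integral v ks y1 y2 \<le> C * ennreal (exp (- (q * (y1 - y2)))))"

lemma chain_exp_bounded_Nil: "chain_exp_bounded v [] v"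
  unfolding chain_exp_bounded_def by (intro exI[of _ 1]) simp

lemma edge_kernel_exp_le:
  assumes "t \<ge> 0"
  shows "edge_kernel True \<theta> x1 x2 y1 y2 * exp (- (q * (y1 - y2)))
    \<le> exp (t * ln t - t + t * x1) * (ffun \<theta> (y1 - x1) * exp (- q * y1)) * (ffun \<theta> (y2 - x2) * exp ((q - t) * y2))"
proof -
  have "exp (- exp (- (x1 - y2))) \<le> exp (t * ln t - t - t * (y2 - x1))"
    using exp_neg_exp_le[OF assms, of "y2 - x1"] by simp
  then have "edge_kernel True \<theta> x1 x2 y1 y2 * exp (- (q * (y1 - y2)))
      \<le> ffun \<theta> (y1 - x1) * ffun \<theta> (y2 - x2) * exp (t * ln t - t - t * (y2 - x1)) * exp (- (q * (y1 - y2)))"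
    unfolding edge_kernel_def by (simp add: ffun_pos less_imp_le)
  also have "\<dots> = exp (t * ln t - t + t * x1) * (ffun \<theta> (y1 - x1) * exp (- q * y1))
      * (ffun \<theta> (y2 - x2) * exp ((q - t) * y2))"
    unfolding ffun_def mult_exp_exp by (simp add: algebra_simps)
  finally show ?thesis .
qed

lemma edge_kernel_mult_le:
  assumes "0 \<le> t" and "c \<le> C * ennreal (exp (- (q * (y1 - y2))))"
  shows "ennreal (edge_kernel True \<theta> x1 x2 y1 y2) * c
    \<le> C * ennreal (exp (t * ln t - t + t * x1))
      * (ennreal (ffun \<theta> (y1 - x1) * exp (- q * y1)) * ennreal (ffun \<theta> (y2 - x2) * exp ((q - t) * y2)))"
proof -
  have "ennreal (edge_kernel True \<theta> x1 x2 y1 y2) * c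
      \<le> ennreal (edge_kernel True \<theta> x1 x2 y1 y2) * (C * ennreal (exp (- (q * (y1 - y2)))))"
    by (intro mult_left_mono assms(2)) simp
  also have "\<dots> = C * ennreal (edge_kernel True \<theta> x1 x2 y1 y2 * exp (- (q * (y1 - y2))))"
    by (simp add: ennreal_mult edge_kernel_nonneg mult_ac)
  also have "\<dots> \<le> C * ennreal (exp (t * ln t - t + t * x1)
      * (ffun \<theta> (y1 - x1) * exp (- q * y1)) * (ffun \<theta> (y2 - x2) * exp ((q - t) * y2)))"
    by (intro mult_left_mono ennreal_leI edge_kernel_exp_le assms(1)) simp
  finally show ?thesis
    by (simp add: ennreal_mult ffun_pos less_imp_le mult_ac)
qed

lemma chain_exp_bounded_Cons:
  assumes "chain_exp_bounded v ks q" and "0 \<le> t" and "\<theta> + q > 0" "\<theta> - q + t > 0"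
  shows "chain_exp_bounded v ((True, \<theta>) # ks) (q - t)"
proof -
  obtain C where C: "C < \<infinity>" "\<And>y1 y2. chain_integral v ks y1 y2 \<le> C * ennreal (exp (- (q * (y1 - y2))))"
    using assms(1) unfolding chain_exp_bounded_def by blast
  define D where "D = exp (t * ln t - t)"
  have "chain_integral v ((True, \<theta>) # ks) x1 x2 \<le> C * ennreal D * ffun_integral (\<theta> + q)
      * ffun_integral (\<theta> - q + t) * ennreal (exp (- ((q - t) * (x1 - x2))))" for x1 x2
  proof -
    have "chain_integral v ((True, \<theta>) # ks) x1 x2 \<le> (\<integral>\<^sup>+y1. \<integral>\<^sup>+y2. C * ennreal (exp (t * ln t - t + t * x1))
        * (ennreal (ffun \<theta> (y1 - x1) * exp (- q * y1)) * ennreal (ffun \<theta> (y2 - x2) * exp ((q - t) * y2)))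
        \<partial>lborel \<partial>lborel)"
      by (simp only: chain_integral.simps) (intro nn_integral_mono edge_kernel_mult_le assms(2) C(2))
    also have "\<dots> = C * ennreal (exp (t * ln t - t + t * x1))
        * ((\<integral>\<^sup>+y. ennreal (ffun \<theta> (y - x1) * exp (- q * y)) \<partial>lborel)
          * (\<integral>\<^sup>+y. ennreal (ffun \<theta> (y - x2) * exp ((q - t) * y)) \<partial>lborel))"
      by (subst nn_integral_lborel_product[symmetric]; (measurable)?) (simp add: nn_integral_cmult)
    also have "\<dots> = C * ennreal (exp (t * ln t - t + t * x1))
        * (ennreal (exp (- q * x1)) * ffun_integral (\<theta> + q)) * (ennreal (exp ((q - t) * x2)) * ffun_integral (\<theta> - q + t))"
      using nn_integral_ffun_exp[of \<theta> x1 "- q"] nn_integral_ffun_exp[of \<theta> x2 "q - t"]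
      by (simp add: mult.assoc diff_diff_eq2 add.commute add_diff_eq)
    also have "\<dots> = C * ennreal D * ffun_integral (\<theta> + q) * ffun_integral (\<theta> - q + t)
        * ennreal (exp (t * ln t - t + t * x1) * exp (- q * x1) * exp ((q - t) * x2) / D)"
      by (simp add: D_def ennreal_mult'[symmetric] mult_ac)
    also have "exp (t * ln t - t + t * x1) * exp (- q * x1) * exp ((q - t) * x2) / D = exp (- ((q - t) * (x1 - x2)))"
      unfolding D_def mult_exp_exp exp_diff[symmetric] by (simp add: algebra_simps)
    finally show ?thesis .
  qed
  moreover have "C * ennreal D * ffun_integral (\<theta> + q) * ffun_integral (\<theta> - q + t) < \<infinity>"
    using C(1) ffun_integral_finite assms(3,4) by (simp add: ennreal_mult_less_top)
  ultimately show ?thesis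
    unfolding chain_exp_bounded_def by blast
qed

lemma chain_integral_first_edge_le:
  assumes bound: "\<And>y1 y2. chain_integral v ks y1 y2 \<le> C * ennreal (exp (- (q * (y1 - y2))))"
  shows "chain_integral v ((True, \<theta>) # ks) 0 p
    \<le> C * ffun_integral (\<theta> + q) * (\<integral>\<^sup>+y. ennreal (ffun \<theta> (y - p) * exp (q * y - exp y)) \<partial>lborel)"
proof -
  have "ennreal (edge_kernel True \<theta> 0 p y1 y2) * chain_integral v ks y1 y2
      \<le> C * (ennreal (ffun \<theta> (y1 - 0) * exp (- q * y1)) * ennreal (ffun \<theta> (y2 - p) * exp (q * y2 - exp y2)))"
    for y1 y2
  proof -
    have "ennreal (edge_kernel True \<theta> 0 p y1 y2) * chain_integral v ks y1 y2
        \<le> ennreal (edge_kernel True \<theta> 0 p y1 y2) * (C * ennreal (exp (- (q * (y1 - y2)))))"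
      by (intro mult_left_mono bound) simp
    also have "\<dots> = C * ennreal (edge_kernel True \<theta> 0 p y1 y2 * exp (- (q * (y1 - y2))))"
      by (simp add: ennreal_mult edge_kernel_nonneg mult_ac)
    also have "edge_kernel True \<theta> 0 p y1 y2 * exp (- (q * (y1 - y2)))
        = (ffun \<theta> (y1 - 0) * exp (- q * y1)) * (ffun \<theta> (y2 - p) * exp (q * y2 - exp y2))"
      unfolding edge_kernel_def ffun_def mult_exp_exp by (simp add: mult_exp_exp algebra_simps)
    finally show ?thesis
      by (simp add: ennreal_mult ffun_pos less_imp_le)
  qed
  then have "chain_integral v ((True, \<theta>) # ks) 0 p \<le> (\<integral>\<^sup>+y1. \<integral>\<^sup>+y2.
      C * (ennreal (ffun \<theta> (y1 - 0) * exp (- q * y1)) * ennreal (ffun \<theta> (y2 - p) * exp (q * y2 - exp y2)))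
      \<partial>lborel \<partial>lborel)"
    by (simp only: chain_integral.simps) (intro nn_integral_mono)
  also have "\<dots> = C * ((\<integral>\<^sup>+y. ennreal (ffun \<theta> (y - 0) * exp (- q * y)) \<partial>lborel)
      * (\<integral>\<^sup>+y. ennreal (ffun \<theta> (y - p) * exp (q * y - exp y)) \<partial>lborel))"
    by (subst nn_integral_lborel_product[symmetric]; (measurable)?) (simp add: nn_integral_cmult)
  finally show ?thesis
    using nn_integral_ffun_exp[of \<theta> 0 "- q"] by (simp add: mult.assoc)
qed

lemma nn_integral_first_edge_weight:
  "(\<integral>\<^sup>+p. ennreal (exp (u * p)) * (\<integral>\<^sup>+y. ennreal (ffun \<theta> (y - p) * exp (q * y - exp y)) \<partial>lborel) \<partial>lborel)
    = ffun_integral (q + u) * ffun_integral (\<theta> + u)"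
proof -
  have "(\<integral>\<^sup>+p. ennreal (exp (u * p)) * (\<integral>\<^sup>+y. ennreal (ffun \<theta> (y - p) * exp (q * y - exp y)) \<partial>lborel) \<partial>lborel)
      = (\<integral>\<^sup>+y. \<integral>\<^sup>+p. ennreal (exp (q * y - exp y)) * ennreal (ffun \<theta> (y - p) * exp (u * p)) \<partial>lborel \<partial>lborel)"
    by (simp add: nn_integral_cmult[symmetric], subst nn_integral_lborel_swap, measurable)
      (intro nn_integral_cong, simp add: ennreal_mult'[symmetric] ffun_pos less_imp_le mult_ac)
  also have "\<dots> = (\<integral>\<^sup>+y. ennreal (exp (q * y - exp y)) * (ennreal (exp (u * y)) * ffun_integral (\<theta> + u)) \<partial>lborel)"
    by (simp add: nn_integral_cmult nn_integral_ffun_reflect_exp)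
  also have "\<dots> = (\<integral>\<^sup>+y. ennreal (exp ((q + u) * y - exp y)) \<partial>lborel) * ffun_integral (\<theta> + u)"
    by (subst nn_integral_multc[symmetric], simp)
      (intro nn_integral_cong, simp add: ennreal_mult'[symmetric] mult_exp_exp algebra_simps)
  also have "(\<integral>\<^sup>+y. ennreal (exp ((q + u) * y - exp y)) \<partial>lborel) = ffun_integral (q + u)"
    unfolding ffun_integral_def ffun_def
    by (subst nn_integral_lborel_reflect[where t = 0]) (simp_all add: algebra_simps)
  finally show ?thesis .
qed

lemma chain_partition_finite:
  assumes "chain_exp_bounded v ks q" and "\<theta> + q > 0" "\<theta> + u > 0" "q + u > 0"
  shows "chain_partition u v x0 ((True, \<theta>) # ks) < \<infinity>"
proof -
  obtain C where C: "C < \<infinity>" "\<And>y1 y2. chain_integral v ks y1 y2 \<le> C * ennreal (exp (- (q * (y1 - y2))))"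
    using assms(1) unfolding chain_exp_bounded_def by blast
  have "chain_partition u v x0 ((True, \<theta>) # ks) \<le> (\<integral>\<^sup>+p. ennreal (exp (u * p))
      * (C * ffun_integral (\<theta> + q) * (\<integral>\<^sup>+y. ennreal (ffun \<theta> (y - p) * exp (q * y - exp y)) \<partial>lborel)) \<partial>lborel)"
    unfolding chain_partition_eq by (intro nn_integral_mono mult_left_mono chain_integral_first_edge_le C(2)) simp
  also have "\<dots> = C * ffun_integral (\<theta> + q) * (\<integral>\<^sup>+p. ennreal (exp (u * p))
      * (\<integral>\<^sup>+y. ennreal (ffun \<theta> (y - p) * exp (q * y - exp y)) \<partial>lborel) \<partial>lborel)"
    by (simp add: nn_integral_cmult[symmetric] mult_ac)
  also have "\<dots> = C * ffun_integral (\<theta> + q) * (ffun_integral (q + u) * ffun_integral (\<theta> + u))"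
    unfolding nn_integral_first_edge_weight ..
  also have "\<dots> < \<infinity>"
    using C(1) assms(2-4) ffun_integral_finite by (simp add: ennreal_mult_less_top)
  finally show ?thesis .
qed

lemma chain_exp_bounded_horizontal:
  assumes "\<theta>s \<noteq> []" and "0 \<le> t" and "\<forall>\<theta>\<in>set \<theta>s. \<bar>v - t\<bar> < \<theta>"
  shows "chain_exp_bounded v (map (Pair True) \<theta>s) (v - t)"
  using assms(1,3)
proof (induction \<theta>s)
  case (Cons \<theta> \<theta>s)
  show ?case
  proof (cases "\<theta>s = []")
    case True
    then show ?thesis
      using chain_exp_bounded_Cons[OF chain_exp_bounded_Nil[of v] assms(2), of \<theta>] Cons.prems assms(2)
      by auto
  next
    case False
    then show ?thesis
      using chain_exp_bounded_Cons[OF Cons.IH, of 0] Cons.prems by auto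
  qed
qed simp

lemma finite_sets_separated:
  fixes A B :: "real set"
  assumes "finite A" "A \<noteq> {}" "finite B" "B \<noteq> {}" and "\<forall>x\<in>A. \<forall>y\<in>B. x < y"
  shows "\<exists>t. (\<forall>x\<in>A. x < t) \<and> (\<forall>y\<in>B. t < y)"
proof -
  have "Max A < Min B"
    using assms by simp
  moreover have "x \<le> Max A" if "x \<in> A" for x
    using assms(1) that by simp
  moreover have "Min B \<le> y" if "y \<in> B" for y
    using assms(3) that by simp
  ultimately show ?thesis
    by (intro exI[of _ "(Max A + Min B) / 2"] conjI ballI) force+
qed

text \<open>The decay rate \<open>v - t\<close> needs \<open>max 0 (v - \<theta>) < t < min (u + v) (\<theta> + v)\<close> for all
  labels \<open>\<theta>\<close>; the hypotheses say exactly that this range is nonempty.\<close>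
lemma chain_partition_horizontal_finite:
  assumes "\<theta>s \<noteq> []"
    and "\<forall>\<theta>\<in>set \<theta>s. \<forall>\<theta>'\<in>set \<theta>s. \<theta> + \<theta>' > 0"
    and "\<forall>\<theta>\<in>set \<theta>s. \<theta> + u > 0" "\<forall>\<theta>\<in>set \<theta>s. \<theta> + v > 0" "u + v > 0"
  shows "chain_partition u v x0 (map (Pair True) \<theta>s) < \<infinity>"
proof -
  obtain \<theta>1 \<theta>s' where \<theta>s: "\<theta>s = \<theta>1 # \<theta>s'"
    using assms(1) by (cases \<theta>s) auto
  show ?thesis
  proof (cases "\<theta>s' = []")
    case True
    then show ?thesis
      using chain_partition_finite[OF chain_exp_bounded_Nil] assms(3-5) \<theta>s by simp
  next
    case False
    let ?A = "insert 0 ((\<lambda>\<theta>. v - \<theta>) ` set \<theta>s)" and ?B = "insert (u + v) ((\<lambda>\<theta>. \<theta> + v) ` set \<theta>s)"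
    have "v - \<theta> < \<theta>' + v" if "\<theta> \<in> set \<theta>s" "\<theta>' \<in> set \<theta>s" for \<theta> \<theta>'
      using assms(2) that by force
    then have "\<forall>x\<in>?A. \<forall>y\<in>?B. x < y"
      using assms(3-5) by (auto simp: add.commute)
    then obtain t where "\<forall>x\<in>?A. x < t" "\<forall>y\<in>?B. t < y"
      using finite_sets_separated[of ?A ?B] by auto
    then have t: "0 < t" "t < u + v" and "\<forall>\<theta>\<in>set \<theta>s. \<bar>v - t\<bar> < \<theta>"
      by (auto simp: abs_less_iff)
    with \<theta>s have "chain_exp_bounded v (map (Pair True) \<theta>s') (v - t)" "\<theta>1 + (v - t) > 0"
      using chain_exp_bounded_horizontal[OF False] by auto
    then show ?thesis
      using chain_partition_finite assms(3) t \<theta>s by simp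
  qed
qed

section \<open>The edge labels of a down-right path\<close>

definition path_kernels :: "nat \<Rightarrow> (nat \<Rightarrow> real) \<Rightarrow> int \<Rightarrow> bool list \<Rightarrow> (bool \<times> real) list" where
  "path_kernels N a m0 s = map (\<lambda>j. (s ! (j - 1), edge_label N a m0 s j)) [1..<Suc (length s)]"

lemma length_path_kernels [simp]: "length (path_kernels N a m0 s) = length s"
  by (simp add: path_kernels_def del: upt_Suc)

lemma nth_path_kernels:
  "i < length s \<Longrightarrow> path_kernels N a m0 s ! i = (s ! i, edge_label N a m0 s (Suc i))"
  by (simp add: path_kernels_def del: upt_Suc)

lemma edge_label_append:
  assumes "1 \<le> j" "j \<le> length s"
  shows "edge_label N a m0 (s @ t) j = edge_label N a m0 s j"
proof -
  have "j - 1 < length s"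
    using assms by simp
  with assms show ?thesis
    by (simp add: edge_label_def path_vertex_def nth_append)
qed

lemma edge_label_snoc:
  "edge_label N a m0 (s @ [b]) (Suc (length s)) =
     (if b then alpha_ext N a (m0 + int (length (filter id s)) + 1)
      else alpha_ext N a (m0 - int (length (filter Not s))))"
  by (simp add: edge_label_def path_vertex_def ac_simps)

lemma mset_edge_labels:
  "mset (map (edge_label N a m0 s) [1..<Suc (length s)]) =
     mset (map (alpha_ext N a) [m0 - int (length (filter Not s)) + 1 .. m0 + int (length (filter id s))])"
proof (induction s rule: rev_induct)
  case (snoc b s)
  let ?v = "int (length (filter Not s))" and ?h = "int (length (filter id s))"
  have "map (edge_label N a m0 (s @ [b])) [1..<Suc (length s)] = map (edge_label N a m0 s) [1..<Suc (length s)]"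
    by (intro map_cong refl edge_label_append) auto
  then have "mset (map (edge_label N a m0 (s @ [b])) [1..<Suc (length s)])
      = mset (map (alpha_ext N a) [m0 - ?v + 1 .. m0 + ?h])"
    by (simp only: snoc.IH)
  then have "mset (map (edge_label N a m0 (s @ [b])) [1..<Suc (length (s @ [b]))]) =
      add_mset (edge_label N a m0 (s @ [b]) (Suc (length s))) (mset (map (alpha_ext N a) [m0 - ?v + 1 .. m0 + ?h]))"
    by simp
  also have "\<dots> = mset (map (alpha_ext N a)
      [m0 - int (length (filter Not (s @ [b]))) + 1 .. m0 + int (length (filter id (s @ [b])))])"
  proof (cases b)
    case True
    then show ?thesis
      using upto_rec2[of "m0 - ?v + 1" "m0 + ?h + 1"] by (simp add: edge_label_snoc ac_simps)
  next
    case False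
    then show ?thesis
      using upto_rec1[of "m0 - ?v" "m0 + ?h"] by (simp add: edge_label_snoc algebra_simps)
  qed
  finally show ?case .
qed simp

lemma alpha_ext_periodic: "alpha_ext N a (n + int N) = alpha_ext N a n"
proof -
  have "(n + int N - 1) mod int N = (n - 1) mod int N"
    by (metis add.commute add_diff_eq mod_add_self1)
  then show ?thesis
    unfolding alpha_ext_def by simp
qed

lemma mset_alpha_ext_upto_shift:
  assumes "N \<ge> 1"
  shows "mset (map (alpha_ext N a) [lo + 1 .. lo + int N]) = mset (map (alpha_ext N a) [lo .. lo + int N - 1])"
  using assms upto_rec2[of "lo + 1" "lo + int N"] upto_rec1[of lo "lo + int N - 1"]
  by (simp add: alpha_ext_periodic add.commute)

lemma mset_alpha_ext_upto:
  assumes "N \<ge> 1"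
  shows "mset (map (alpha_ext N a) [lo .. lo + int N - 1]) = mset (map a [1..<Suc N])"
proof (induction lo rule: int_induct[where k = 1])
  case base
  have "map (alpha_ext N a) [1 .. int N] = map a [1..<Suc N]"
    by (rule nth_equalityI) (simp_all add: alpha_ext_def del: upt_Suc)
  then show ?case
    by simp
next
  case (step1 i)
  then show ?case
    using mset_alpha_ext_upto_shift[OF assms, of a i] by (simp add: add.assoc)
next
  case (step2 i)
  then show ?case
    using mset_alpha_ext_upto_shift[OF assms, of a "i - 1"] by (simp add: algebra_simps)
qed

lemma mset_path_labels:
  assumes "N \<ge> 1" "length s = N"
  shows "mset (map snd (path_kernels N a m0 s)) = mset (map a [1..<Suc N])"
proof -
  let ?lo = "m0 - int (length (filter Not s)) + 1"
  have "length (filter Not s) + length (filter id s) = N"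
    using assms(2) sum_length_filter_compl[of id s] by (simp add: comp_def)
  then have "m0 + int (length (filter id s)) = ?lo + int N - 1"
    by linarith
  then show ?thesis
    using mset_edge_labels[of N a m0 s] mset_alpha_ext_upto[OF assms(1), of a ?lo] assms(2)
    by (simp add: path_kernels_def comp_def)
qed

section \<open>Integrating out the weight\<close>

interpretation lborel_product: product_sigma_finite "\<lambda>_ :: nat \<times> nat. lborel :: real measure"
  by standard

lemma borel_measurable_override_on [measurable]:
  "(\<lambda>\<mu>. override_on lam \<mu> U i) \<in> borel_measurable (PiM U (\<lambda>_. lborel))"
  by (cases "i \<in> U") (simp_all add: override_on_def)

lemma override_on_merge:
  "L \<inter> U = {} \<Longrightarrow> override_on f (merge L U (x, y)) (L \<union> U) = override_on (override_on f x L) y U"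
  by (auto simp: override_on_def merge_def fun_eq_iff)

definition tail_weight :: "real \<Rightarrow> (bool \<times> real) list \<Rightarrow> nat \<Rightarrow> (nat \<times> nat \<Rightarrow> real) \<Rightarrow> ennreal" where
  "tail_weight v ks k lam =
     (\<Prod>j\<in>{Suc k..length ks}. ennreal (edge_kernel (fst (ks ! (j - 1))) (snd (ks ! (j - 1)))
        (lam (1, j - 1)) (lam (2, j - 1)) (lam (1, j)) (lam (2, j))))
     * ennreal (exp (- (v * (lam (1, length ks) - lam (2, length ks)))))"

lemma borel_measurable_tail_weight [measurable]:
  "(\<lambda>\<mu>. tail_weight v ks k (override_on lam \<mu> U)) \<in> borel_measurable (PiM U (\<lambda>_. lborel))"
  unfolding tail_weight_def by measurable

lemma tail_weight_Suc:
  assumes "k < length ks"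
  shows "tail_weight v ks k lam = ennreal (edge_kernel (fst (ks ! k)) (snd (ks ! k))
      (lam (1, k)) (lam (2, k)) (lam (1, Suc k)) (lam (2, Suc k))) * tail_weight v ks (Suc k) lam"
proof -
  have "{Suc k..length ks} = insert (Suc k) {Suc (Suc k)..length ks}"
    using assms by auto
  then show ?thesis
    unfolding tail_weight_def by (simp add: mult.assoc)
qed

lemma tail_weight_cong:
  assumes "k \<le> length ks" and "\<And>i j. i \<in> {1, 2} \<Longrightarrow> j \<in> {k..length ks} \<Longrightarrow> lam (i, j) = lam' (i, j)"
  shows "tail_weight v ks k lam = tail_weight v ks k lam'"
proof -
  have "lam (i, j - 1) = lam' (i, j - 1)" "lam (i, j) = lam' (i, j)"
    if "i \<in> {1, 2}" "j \<in> {Suc k..length ks}" for i j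
  proof -
    have "j - 1 \<in> {k..length ks}" "j \<in> {k..length ks}"
      using that by auto
    then show "lam (i, j - 1) = lam' (i, j - 1)" "lam (i, j) = lam' (i, j)"
      using assms(2) that by blast+
  qed
  moreover have "lam (i, length ks) = lam' (i, length ks)" if "i \<in> {1, 2}" for i
    using assms that by auto
  ultimately show ?thesis
    unfolding tail_weight_def by (intro arg_cong2[where f = "(*)"] prod.cong arg_cong[where f = ennreal]) auto
qed

lemma nn_integral_PiM_pair:
  fixes f :: "real \<Rightarrow> real \<Rightarrow> ennreal"
  assumes [measurable]: "case_prod f \<in> borel_measurable (lborel \<Otimes>\<^sub>M lborel)" and "i1 \<noteq> i2"
  shows "(\<integral>\<^sup>+\<sigma>. f (\<sigma> i1) (\<sigma> i2) \<partial>PiM {i1, i2} (\<lambda>_ :: nat \<times> nat. lborel))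
       = (\<integral>\<^sup>+y1. \<integral>\<^sup>+y2. f y1 y2 \<partial>lborel \<partial>lborel)"
  using lborel_product.product_nn_integral_pair[of f i1 i2] assms nn_integral_lborel_pair[of f]
  by simp

lemma nn_integral_tail_weight:
  assumes "k \<le> length ks"
  shows "(\<integral>\<^sup>+\<mu>. tail_weight v ks k (override_on lam \<mu> ({1, 2} \<times> {Suc k..length ks}))
      \<partial>PiM ({1, 2} \<times> {Suc k..length ks}) (\<lambda>_. lborel))
    = chain_integral v (drop k ks) (lam (1, k)) (lam (2, k))"
  using assms
proof (induction k arbitrary: lam rule: inc_induct)
  case base
  then show ?case
    by (simp add: PiM_empty nn_integral_count_space_finite tail_weight_def override_on_def)
next
  case (step k)
  define L where "L = {(1 :: nat, Suc k), (2, Suc k)}"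
  define U where "U = {1 :: nat, 2} \<times> {Suc (Suc k)..length ks}"
  have split: "{1, 2} \<times> {Suc k..length ks} = L \<union> U" and disj: "L \<inter> U = {}"
    unfolding L_def U_def using step.hyps by auto
  obtain b \<theta> where k: "ks ! k = (b, \<theta>)"
    by force
  have inner: "(\<integral>\<^sup>+y. tail_weight v ks k (override_on (override_on lam x L) y U) \<partial>PiM U (\<lambda>_. lborel))
      = ennreal (edge_kernel b \<theta> (lam (1, k)) (lam (2, k)) (x (1, Suc k)) (x (2, Suc k)))
        * chain_integral v (drop (Suc k) ks) (x (1, Suc k)) (x (2, Suc k))" for x
  proof -
    have "override_on (override_on lam x L) y U (i, k) = lam (i, k)"
      and "override_on (override_on lam x L) y U (i, Suc k) = x (i, Suc k)" if "i \<in> {1, 2}" for i y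
      using that unfolding override_on_def L_def U_def by auto
    then have "(\<integral>\<^sup>+y. tail_weight v ks k (override_on (override_on lam x L) y U) \<partial>PiM U (\<lambda>_. lborel))
        = ennreal (edge_kernel b \<theta> (lam (1, k)) (lam (2, k)) (x (1, Suc k)) (x (2, Suc k)))
          * (\<integral>\<^sup>+y. tail_weight v ks (Suc k) (override_on (override_on lam x L) y U) \<partial>PiM U (\<lambda>_. lborel))"
      using step.hyps by (simp add: tail_weight_Suc k nn_integral_cmult)
    also have "(\<integral>\<^sup>+y. tail_weight v ks (Suc k) (override_on (override_on lam x L) y U) \<partial>PiM U (\<lambda>_. lborel))
        = chain_integral v (drop (Suc k) ks) (x (1, Suc k)) (x (2, Suc k))"
      using step.IH[of "override_on lam x L"] by (simp add: U_def L_def override_on_def)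
    finally show ?thesis .
  qed
  have "(\<integral>\<^sup>+\<mu>. tail_weight v ks k (override_on lam \<mu> (L \<union> U)) \<partial>PiM (L \<union> U) (\<lambda>_. lborel))
      = (\<integral>\<^sup>+x. \<integral>\<^sup>+y. tail_weight v ks k (override_on lam (merge L U (x, y)) (L \<union> U))
          \<partial>PiM U (\<lambda>_. lborel) \<partial>PiM L (\<lambda>_. lborel))"
    by (rule lborel_product.product_nn_integral_fold[OF disj]) (auto simp: L_def U_def)
  also have "\<dots> = (\<integral>\<^sup>+x. ennreal (edge_kernel b \<theta> (lam (1, k)) (lam (2, k)) (x (1, Suc k)) (x (2, Suc k)))
      * chain_integral v (drop (Suc k) ks) (x (1, Suc k)) (x (2, Suc k)) \<partial>PiM L (\<lambda>_. lborel))"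
    by (simp only: override_on_merge[OF disj] inner)
  also have "\<dots> = chain_integral v (drop k ks) (lam (1, k)) (lam (2, k))"
  proof -
    have "drop k ks = (b, \<theta>) # drop (Suc k) ks"
      using step.hyps k by (metis Cons_nth_drop_Suc)
    then show ?thesis
      unfolding L_def by (subst nn_integral_PiM_pair) (simp_all, measurable)
  qed
  finally show ?case
    unfolding split .
qed

lemma wt_LG_eq_tail_weight:
  assumes "length s = N"
  shows "ennreal (wt_LG N a u v m0 s lam)
       = ennreal (exp (- (u * (lam (1, 0) - lam (2, 0))))) * tail_weight v (path_kernels N a m0 s) 0 lam"
proof -
  let ?ks = "path_kernels N a m0 s"
  have edge: "(\<Prod>i\<in>{1, 2 :: nat}. ffun (edge_label N a m0 s j) (lam (i, up_idx s j) - lam (i, low_idx s j)))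
        * exp (- exp (- (lam (1, low_idx s j) - lam (2, up_idx s j))))
      = edge_kernel (fst (?ks ! (j - 1))) (snd (?ks ! (j - 1))) (lam (1, j - 1)) (lam (2, j - 1)) (lam (1, j)) (lam (2, j))"
    if "j \<in> {1..N}" for j
  proof -
    have "j - 1 < length s" "Suc (j - 1) = j"
      using that assms by auto
    then have "?ks ! (j - 1) = (s ! (j - 1), edge_label N a m0 s j)"
      using nth_path_kernels[of "j - 1" s] by simp
    then show ?thesis
      by (simp add: up_idx_def low_idx_def edge_kernel_def)
  qed
  have "wt_LG N a u v m0 s lam = exp (- (u * (lam (1, 0) - lam (2, 0)))) * exp (- (v * (lam (1, N) - lam (2, N))))
      * (\<Prod>j\<in>{1..N}. edge_kernel (fst (?ks ! (j - 1))) (snd (?ks ! (j - 1)))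
          (lam (1, j - 1)) (lam (2, j - 1)) (lam (1, j)) (lam (2, j)))"
  proof -
    have "(\<Prod>j\<in>{1..N}. (\<Prod>i\<in>{1, 2 :: nat}. ffun (edge_label N a m0 s j) (lam (i, up_idx s j) - lam (i, low_idx s j)))
          * exp (- exp (- (lam (1, low_idx s j) - lam (2, up_idx s j)))))
        = (\<Prod>j\<in>{1..N}. edge_kernel (fst (?ks ! (j - 1))) (snd (?ks ! (j - 1)))
          (lam (1, j - 1)) (lam (2, j - 1)) (lam (1, j)) (lam (2, j)))"
      by (rule prod.cong[OF refl edge])
    then show ?thesis
      unfolding wt_LG_def by simp
  qed
  then show ?thesis
    using assms by (simp add: tail_weight_def ennreal_mult prod_ennreal edge_kernel_nonneg prod_nonneg mult_ac)
qed

lemma Z_LG_eq_chain_partition: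
  assumes "length s = N"
  shows "Z_LG N a u v m0 s x0 = chain_partition u v x0 (path_kernels N a m0 s)"
proof -
  let ?ks = "path_kernels N a m0 s" and ?U = "{1 :: nat, 2} \<times> {1..N}"
  have len: "length ?ks = N"
    using assms by simp
  have tail: "(\<integral>\<^sup>+y. tail_weight v ?ks 0 (override_on lam y ?U) \<partial>PiM ?U (\<lambda>_. lborel))
      = chain_integral v ?ks (lam (1, 0)) (lam (2, 0))" for lam
    using nn_integral_tail_weight[of 0 ?ks v lam] assms by simp
  have vars: "int_vars N = {(2, 0)} \<union> ?U" and disj: "{(2 :: nat, 0 :: nat)} \<inter> ?U = {}"
    unfolding int_vars_def by auto
  have "Z_LG N a u v m0 s x0 = (\<integral>\<^sup>+lam. ennreal (exp (- (u * (x0 - lam (2, 0)))))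
      * tail_weight v ?ks 0 (override_on (\<lambda>_. x0) lam (int_vars N)) \<partial>PiM (int_vars N) (\<lambda>_. lborel))"
    unfolding Z_LG_def wt_LG_eq_tail_weight[OF assms]
    by (intro nn_integral_cong arg_cong2[where f = "(*)"] tail_weight_cong)
      (auto simp: assms override_on_def int_vars_def)
  also have "\<dots> = (\<integral>\<^sup>+x. \<integral>\<^sup>+y. ennreal (exp (- (u * (x0 - x (2, 0)))))
      * tail_weight v ?ks 0 (override_on ((\<lambda>_. x0)((2, 0) := x (2, 0))) y ?U) \<partial>PiM ?U (\<lambda>_. lborel)
      \<partial>PiM {(2 :: nat, 0 :: nat)} (\<lambda>_. lborel))"
    unfolding vars
    by (subst lborel_product.product_nn_integral_fold[OF disj], simp, simp, measurable)
      (intro nn_integral_cong arg_cong2[where f = "(*)"] tail_weight_cong,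
        auto simp: len override_on_def merge_def)
  also have "\<dots> = (\<integral>\<^sup>+x. ennreal (exp (- (u * (x0 - x (2, 0))))) * chain_integral v ?ks x0 (x (2, 0))
      \<partial>PiM {(2 :: nat, 0 :: nat)} (\<lambda>_. lborel))"
    unfolding nn_integral_cmult[OF borel_measurable_tail_weight] tail by simp
  also have "\<dots> = chain_partition u v x0 ?ks"
    unfolding chain_partition_def by (rule lborel_product.product_nn_integral_singleton) measurable
  finally show ?thesis .
qed

theorem proposition3p12:
  fixes N :: nat and a :: "nat \<Rightarrow> real" and u v :: real
  assumes "N \<ge> 1"
    and "\<forall>i\<in>{1..N}. \<forall>j\<in>{1..N}. a i + a j > 0"
    and "\<forall>i\<in>{1..N}. a i + u > 0"
    and "\<forall>i\<in>{1..N}. a i + v > 0"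
    and "u + v > 0"
  shows "\<exists>Z::ennreal. Z < \<infinity> \<and>
           (\<forall>m0 s x0. is_down_right_path N m0 s \<longrightarrow> Z_LG N a u v m0 s x0 = Z)"
proof (intro exI conjI allI impI)
  let ?\<theta>s = "map a [1..<Suc N]"
  have "set ?\<theta>s = a ` {1..N}"
    by auto
  then show "chain_partition u v 0 (map (Pair True) ?\<theta>s) < \<infinity>"
    using assms by (intro chain_partition_horizontal_finite) auto
  fix m0 s x0
  assume "is_down_right_path N m0 s"
  then have len: "length s = N"
    unfolding is_down_right_path_def by simp
  have "Z_LG N a u v m0 s x0 = chain_partition u v 0 (path_kernels N a m0 s)"
    unfolding Z_LG_eq_chain_partition[OF len] chain_partition_eq ..
  also have "\<dots> = chain_partition u v 0 (map (Pair True) ?\<theta>s)"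
    using mset_path_labels[OF assms(1) len] chain_integral_mset_eq[of "path_kernels N a m0 s" "map (Pair True) ?\<theta>s"]
    by (simp add: chain_partition_def comp_def)
  finally show "Z_LG N a u v m0 s x0 = chain_partition u v 0 (map (Pair True) ?\<theta>s)" .
qed

end
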